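(* Let $\Gamma=(G,\sigma)$ be a connected signed graph with $G=(V,E)$, $|V|=n$, and $\sigma\equiv-1$. For each $p>1$ let $f^{(p)}\in\mathcal S_p$ be an eigenfunction of $\Delta_p^\sigma$ with eigenvalue $\lambda_n^{(p)}$. Then for every $i\in V$ the limit $\lim_{p\to\infty}|f^{(p)}(i)|^{p/2}$ exists, and the function $f(i):=\lim_{p\to\infty}|f^{(p)}(i)|^{p/2}$ is an eigenfunction of $A^\mu_{-\Gamma}$ corresponding to the eigenvalue $\lambda_n(A^\mu_{-\Gamma})$.
   Context: $G=(V,E)$ is a finite undirected graph without self-loops, $V=\{1,\dots,n\}$. A signed graph $\Gamma=(G,\sigma)$ has signature $\sigma:E\to\{\pm1\}$, edge weight $w:E\to(0,\infty)$, vertex measure $\mu:V\to(0,\infty)$, potential $\kappa:V\to\mathbb R$. With $\Psi_p(t)=|t|^{p-2}t$ ($\Psi_p(0)=0$), the $p$-Laplacian is $\Delta_p^\sigma f(i)=\sum_{j\sim i}w_{ij}\Psi_p(f(i)-\sigma_{ij}f(j))+\kappa_i\Psi_p(f(i))$; a nonzero $f$ is an eigenfunction with eigenvalue $\lambda$ if $\Delta_p^\sigma f(i)=\lambda\mu_i\Psi_p(f(i))$ for all $i$. $\mathcal R_p^\sigma(f)=\frac{\sum_{\{i,j\}\in E}w_{ij}|f(i)-\sigma_{ij}f(j)|^p+\sum_i\kappa_i|f(i)|^p}{\sum_i\mu_i|f(i)|^p}$; $\mathcal S_p=\{f:\sum_i\mu_i|f(i)|^p=1\}$; Krasnoselskii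 genus $\gamma(B)$ of closed symmetric $B\subset\mathbb R^n\setminus\{0\}$: least $k$ with an odd continuous map $B\to\mathbb R^k\setminus\{0\}$; $\mathcal F_k(\mathcal S_p)$ = closed symmetric $B\subset\mathcal S_p$ with $\gamma(B)\ge k$; variational eigenvalues $\lambda_k^{(p)}=\min_{B\in\mathcal F_k(\mathcal S_p)}\max_{f\in B}\mathcal R_p^\sigma(f)$ (in particular $\lambda_n^{(p)}=\max_{f\in\mathcal S_p}\mathcal R_p^\sigma(f)$). $-\Gamma=(G,-\sigma)$; $A_{\Gamma}$ has entries $\sigma_{ij}w_{ij}$ for $i\sim j$, $0$ otherwise; $A^\mu_\Gamma=\mathrm{diag}(\mu)^{-1}A_\Gamma$, with eigenvalues $\lambda_1\le\dots\le\lambda_n$. *)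

theory Defs
  imports Complex_Main
begin

text \<open>Vertices are the elements of a finite type 'n (playing the role of V = {1..n}).
  The graph is given by a symmetric irreflexive adjacency relation E; the signature
  sigma, edge weight w are functions on ordered pairs (only their values on edges matter,
  and they are required to be symmetric there); mu is the vertex measure, kappa the potential.\<close>

definition signed_graph ::
  "('n::finite \<Rightarrow> 'n \<Rightarrow> bool) \<Rightarrow> ('n \<Rightarrow> 'n \<Rightarrow> real) \<Rightarrow> ('n \<Rightarrow> 'n \<Rightarrow> real) \<Rightarrow> ('n \<Rightarrow> real) \<Rightarrow> bool" where
  "signed_graph E sigma w mu \<longleftrightarrow>
     (\<forall>i. \<not> E i i) \<and> (\<forall>i j. E i j \<longrightarrow> E j i) \<and>
     (\<forall>i j. E i j \<longrightarrow> w i j > 0 \<and> w i j = w j i \<and> sigma i j \<in> {-1, 1} \<and> sigma i j = sigma j i) \<and>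
     (\<forall>i. mu i > 0)"

definition connected_graph :: "('n::finite \<Rightarrow> 'n \<Rightarrow> bool) \<Rightarrow> bool" where
  "connected_graph E \<longleftrightarrow> (\<forall>i j. E\<^sup>*\<^sup>* i j)"

definition Psi :: "real \<Rightarrow> real \<Rightarrow> real" where
  "Psi p t = (if t = 0 then 0 else \<bar>t\<bar> powr (p - 2) * t)"

definition p_laplacian ::
  "('n::finite \<Rightarrow> 'n \<Rightarrow> bool) \<Rightarrow> ('n \<Rightarrow> 'n \<Rightarrow> real) \<Rightarrow> ('n \<Rightarrow> 'n \<Rightarrow> real) \<Rightarrow> ('n \<Rightarrow> real)
    \<Rightarrow> real \<Rightarrow> ('n \<Rightarrow> real) \<Rightarrow> 'n \<Rightarrow> real" where
  "p_laplacian E sigma w kappa p f i =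
     (\<Sum>j\<in>{j. E i j}. w i j * Psi p (f i - sigma i j * f j)) + kappa i * Psi p (f i)"

definition p_eigenfunction ::
  "('n::finite \<Rightarrow> 'n \<Rightarrow> bool) \<Rightarrow> ('n \<Rightarrow> 'n \<Rightarrow> real) \<Rightarrow> ('n \<Rightarrow> 'n \<Rightarrow> real) \<Rightarrow> ('n \<Rightarrow> real)
    \<Rightarrow> ('n \<Rightarrow> real) \<Rightarrow> real \<Rightarrow> ('n \<Rightarrow> real) \<Rightarrow> real \<Rightarrow> bool" where
  "p_eigenfunction E sigma w mu kappa p f lam \<longleftrightarrow>
     f \<noteq> (\<lambda>_. 0) \<and> (\<forall>i. p_laplacian E sigma w kappa p f i = lam * mu i * Psi p (f i))"

text \<open>Sum over unordered edges {i,j} written as half the sum over ordered adjacent pairs.\<close>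
definition rayleigh ::
  "('n::finite \<Rightarrow> 'n \<Rightarrow> bool) \<Rightarrow> ('n \<Rightarrow> 'n \<Rightarrow> real) \<Rightarrow> ('n \<Rightarrow> 'n \<Rightarrow> real) \<Rightarrow> ('n \<Rightarrow> real)
    \<Rightarrow> ('n \<Rightarrow> real) \<Rightarrow> real \<Rightarrow> ('n \<Rightarrow> real) \<Rightarrow> real" where
  "rayleigh E sigma w mu kappa p f =
     ((1/2) * (\<Sum>(i,j)\<in>{(i,j). E i j}. w i j * \<bar>f i - sigma i j * f j\<bar> powr p)
        + (\<Sum>i\<in>UNIV. kappa i * \<bar>f i\<bar> powr p))
     / (\<Sum>i\<in>UNIV. mu i * \<bar>f i\<bar> powr p)"

definition S_p :: "('n::finite \<Rightarrow> real) \<Rightarrow> real \<Rightarrow> ('n \<Rightarrow> real) set" where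
  "S_p mu p = {f. (\<Sum>i\<in>UNIV. mu i * \<bar>f i\<bar> powr p) = 1}"

text \<open>The largest variational eigenvalue lambda_n^(p) = max over S_p of the Rayleigh quotient.\<close>
definition lambda_max_p ::
  "('n::finite \<Rightarrow> 'n \<Rightarrow> bool) \<Rightarrow> ('n \<Rightarrow> 'n \<Rightarrow> real) \<Rightarrow> ('n \<Rightarrow> 'n \<Rightarrow> real) \<Rightarrow> ('n \<Rightarrow> real)
    \<Rightarrow> ('n \<Rightarrow> real) \<Rightarrow> real \<Rightarrow> real" where
  "lambda_max_p E sigma w mu kappa p = Sup (rayleigh E sigma w mu kappa p ` S_p mu p)"

text \<open>A^mu_Gamma = diag(mu)^{-1} A_Gamma, as a matrix indexed by vertices.\<close>
definition adj_mu ::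
  "('n::finite \<Rightarrow> 'n \<Rightarrow> bool) \<Rightarrow> ('n \<Rightarrow> 'n \<Rightarrow> real) \<Rightarrow> ('n \<Rightarrow> 'n \<Rightarrow> real) \<Rightarrow> ('n \<Rightarrow> real)
    \<Rightarrow> 'n \<Rightarrow> 'n \<Rightarrow> real" where
  "adj_mu E sigma w mu i j = (if E i j then sigma i j * w i j / mu i else 0)"

definition mat_eigenvector :: "('n::finite \<Rightarrow> 'n \<Rightarrow> real) \<Rightarrow> real \<Rightarrow> ('n \<Rightarrow> real) \<Rightarrow> bool" where
  "mat_eigenvector M lam f \<longleftrightarrow> f \<noteq> (\<lambda>_. 0) \<and> (\<forall>i. (\<Sum>j\<in>UNIV. M i j * f j) = lam * f i)"

definition mat_eigenvalues :: "('n::finite \<Rightarrow> 'n \<Rightarrow> real) \<Rightarrow> real set" where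
  "mat_eigenvalues M = {lam. \<exists>f. mat_eigenvector M lam f}"

text \<open>Largest eigenvalue lambda_n (the matrices considered are similar to symmetric ones,
  so all eigenvalues are real).\<close>
definition mat_lambda_max :: "('n::finite \<Rightarrow> 'n \<Rightarrow> real) \<Rightarrow> real" where
  "mat_lambda_max M = Max (mat_eigenvalues M)"

end

(*
  Put g_p = |f_p|^(p/2), a nonnegative vector with sum_i mu_i g_p(i)^2 = 1.  For a, b >= 0
    2^p a b  <=  (a^(2/p) + b^(2/p))^p  <=  2^p (a b + 8p/(p-1)^2 (a^2 + b^2)),
  so for such g the p-energy of g^(2/p) on -Gamma (edge terms |h_i + h_j|^p) lies between
  2^(p-1) <g, W g> - C and 2^(p-1) (<g, W g> + O(1/p)) + C, where W are the edge weights and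
  C bounds the potential term.  The energy of f_p is lambda_n^(p); it is at most the energy of
  |f_p| = g_p^(2/p) and at least that of v^(2/p), where v attains
  Lambda = max <g, W g> over the nonnegative mu-unit sphere.  Hence
  0 <= Lambda - <g_p, W g_p> = O(1/p) + O(2^-p).  By connectivity v is the unique maximiser
  (Perron-Frobenius) and an eigenvector of A^mu_{-Gamma} for its largest eigenvalue Lambda,
  and compactness of the sphere turns <g_p, W g_p> -> Lambda into g_p -> v.
*)

theory Submission
  imports Defs "HOL-Analysis.Analysis" "HOL-Real_Asymp.Real_Asymp"
begin

section \<open>Inequalities for real powers\<close>

lemma powr_diff_le_tangent:
  fixes U V p :: real
  assumes U: "0 \<le> U" "U \<le> V" and p: "1 \<le> p"
  shows "V powr p - U powr p \<le> p * V powr (p - 1) * (V - U)"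
proof (cases "U = 0")
  case True
  show ?thesis
  proof (cases "V = 0")
    case False
    with U have "V powr (p - 1) * V = V powr p"
      by (simp add: powr_mult_base mult.commute)
    then show ?thesis
      using True p by (simp add: mult.assoc mult_le_cancel_right1)
  qed (use True in simp)
next
  case False
  with U have "0 < U" "0 < V" by auto
  have "p * V powr (p - 1) * (U - V) \<le> U powr p - V powr p"
    by (rule convex_on_imp_above_tangent[OF powr_convex[OF p]])
      (use \<open>0 < U\<close> \<open>0 < V\<close> in
        \<open>auto simp: interior_open intro: has_field_derivative_at_within has_real_derivative_powr\<close>)
  then show ?thesis by (simp add: algebra_simps)
qed

lemma powr_mult_square_one_minus_le:
  fixes v p :: real
  assumes v: "0 < v" "v \<le> 1" and p: "1 < p"
  shows "v powr (p - 1) * (1 - v)^2 \<le> 4 / (p - 1)^2"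
proof -
  define s where "s = (p - 1) * (1 - v)"
  have "v \<le> exp (v - 1)" using exp_ge_add_one_self[of "v - 1"] by simp
  then have "v powr (p - 1) \<le> exp (v - 1) powr (p - 1)"
    using v p by (intro powr_mono2) auto
  also have "\<dots> = exp (- s)" by (simp add: powr_def s_def algebra_simps)
  finally have "v powr (p - 1) * (1 - v)^2 \<le> exp (- s) * (1 - v)^2"
    by (rule mult_right_mono) simp
  also have "\<dots> = s^2 / ((p - 1)^2 * exp s)"
  proof -
    have "s^2 = (p - 1)^2 * (1 - v)^2" by (simp add: s_def power_mult_distrib)
    then show ?thesis using p by (simp add: exp_minus field_simps)
  qed
  also have "\<dots> \<le> 4 / (p - 1)^2"
  proof -
    have "0 \<le> s" using v p by (simp add: s_def)
    then have "s^2 / 4 \<le> exp s"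
      using exp_lower_Taylor_quadratic[of s] zero_le_power2[of s] by linarith
    then show ?thesis using p by (simp add: field_simps)
  qed
  finally show ?thesis .
qed

lemma half_one_plus_square_powr_le:
  fixes u p :: real
  assumes u: "0 \<le> u" "u \<le> 1" and p: "1 < p"
  shows "((1 + u^2) / 2) powr p \<le> u powr p + 8 * p / (p - 1)^2"
proof -
  define v where "v = (1 + u^2) / 2"
  have v: "0 < v" "v \<le> 1" using u by (auto simp: v_def power_le_one add_pos_nonneg)
  have v_minus_u: "v - u = (1 - u)^2 / 2" by (simp add: v_def power2_eq_square field_simps)
  have "u^2 \<le> u" using u mult_left_mono[of u 1 u] by (simp add: power2_eq_square)
  then have "1 - u \<le> 2 * (1 - v)" by (simp add: v_def field_simps)
  then have "(1 - u)^2 \<le> 4 * (1 - v)^2"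
    using power_mono[of "1 - u" "2 * (1 - v)" 2] u unfolding power_mult_distrib by simp
  then have gap: "v - u \<le> 2 * (1 - v)^2" unfolding v_minus_u by simp
  have "u \<le> v" using v_minus_u zero_le_power2[of "1 - u"] by linarith
  then have "v powr p - u powr p \<le> p * v powr (p - 1) * (v - u)"
    using u p by (intro powr_diff_le_tangent) auto
  also have "\<dots> \<le> 2 * p * (v powr (p - 1) * (1 - v)^2)"
    using mult_left_mono[OF gap, of "p * v powr (p - 1)"] p by (simp add: algebra_simps)
  also have "\<dots> \<le> 2 * p * (4 / (p - 1)^2)"
    using powr_mult_square_one_minus_le[OF v p] p by (intro mult_left_mono) auto
  finally show ?thesis unfolding v_def by simp
qed

lemma sum_roots_powr_le:
  fixes a b p :: real
  assumes "0 \<le> a" "0 \<le> b" and p: "1 < p"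
  shows "(a powr (2/p) + b powr (2/p)) powr p \<le> 2 powr p * (a * b + (a^2 + b^2) * (8 * p / (p - 1)^2))"
  using assms
proof (induction a b rule: linorder_wlog)
  case (sym a b)
  then show ?case by (simp add: add.commute mult.commute)
next
  case (le a b)
  define c where "c = 8 * p / (p - 1)^2"
  have "0 \<le> c" using p by (simp add: c_def)
  show ?case
  proof (cases "b = 0")
    case False
    with le have "0 < b" by simp
    define u where "u = (a / b) powr (1/p)"
    have u: "0 \<le> u" "u \<le> 1"
      using le \<open>0 < b\<close> p by (auto simp: u_def powr_le1)
    have "a powr (2/p) = u^2 * b powr (2/p)"
      using le \<open>0 < b\<close> by (simp add: u_def powr_divide powr_powr power2_eq_square powr_add[symmetric])
    then have sum_eq: "a powr (2/p) + b powr (2/p) = b powr (2/p) * (2 * ((1 + u^2) / 2))"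
      by (simp add: algebra_simps)
    have "(a powr (2/p) + b powr (2/p)) powr p = (b powr (2/p)) powr p * (2 * ((1 + u^2) / 2)) powr p"
      unfolding sum_eq by (rule powr_mult; simp)
    also have "\<dots> = 2 powr p * b^2 * ((1 + u^2) / 2) powr p"
      using \<open>0 < b\<close> p by (subst powr_mult) (auto simp: powr_powr)
    also have "\<dots> \<le> 2 powr p * b^2 * (u powr p + c)"
      using half_one_plus_square_powr_le[OF u p] by (intro mult_left_mono) (auto simp: c_def)
    also have "\<dots> = 2 powr p * (a * b + b^2 * c)"
      using le \<open>0 < b\<close> p by (simp add: u_def powr_powr power2_eq_square field_simps)
    also have "\<dots> \<le> 2 powr p * (a * b + (a^2 + b^2) * c)"
      using \<open>0 \<le> c\<close> by (intro mult_left_mono add_left_mono mult_right_mono) auto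
    finally show ?thesis by (simp add: c_def)
  qed (use le in simp)
qed

lemma sum_roots_powr_ge:
  fixes a b p :: real
  assumes "0 \<le> a" "0 \<le> b" and p: "1 < p"
  shows "2 powr p * (a * b) \<le> (a powr (2/p) + b powr (2/p)) powr p"
proof -
  have "2 * (a powr (1/p) * b powr (1/p)) \<le> (a powr (1/p))^2 + (b powr (1/p))^2"
    using sum_squares_bound[of "a powr (1/p)" "b powr (1/p)"] by (simp add: power2_eq_square)
  then have "2 * (a * b) powr (1/p) \<le> a powr (2/p) + b powr (2/p)"
    using assms by (simp add: powr_mult power2_eq_square powr_add[symmetric])
  then have "(2 * (a * b) powr (1/p)) powr p \<le> (a powr (2/p) + b powr (2/p)) powr p"
    using p by (intro powr_mono2) auto
  then show ?thesis using assms p by (simp add: powr_mult powr_powr)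
qed

section \<open>The p-energy of a signed graph with all edges negative\<close>

definition antibalanced_energy ::
  "('n::finite \<Rightarrow> 'n \<Rightarrow> real) \<Rightarrow> ('n \<Rightarrow> real) \<Rightarrow> real \<Rightarrow> ('n \<Rightarrow> real) \<Rightarrow> real" where
  "antibalanced_energy W kappa p h =
     (1/2) * (\<Sum>i\<in>UNIV. \<Sum>j\<in>UNIV. W i j * \<bar>h i + h j\<bar> powr p)
     + (\<Sum>i\<in>UNIV. kappa i * \<bar>h i\<bar> powr p)"

lemma antibalanced_energy_le_abs:
  assumes "\<And>i j. 0 \<le> W i j" and "0 \<le> p"
  shows "antibalanced_energy W kappa p h \<le> antibalanced_energy W kappa p (\<lambda>i. \<bar>h i\<bar>)"
proof -
  have "W i j * \<bar>h i + h j\<bar> powr p \<le> W i j * \<bar>\<bar>h i\<bar> + \<bar>h j\<bar>\<bar> powr p" for i j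
    using assms by (intro mult_left_mono powr_mono2) (auto simp: abs_triangle_ineq)
  then show ?thesis
    unfolding antibalanced_energy_def by (simp add: sum_mono)
qed

lemma antibalanced_energy_powr_roots:
  assumes "\<And>i. 0 \<le> g i" and "0 < p"
  shows "antibalanced_energy W kappa p (\<lambda>i. g i powr (2/p)) =
     (1/2) * (\<Sum>i\<in>UNIV. \<Sum>j\<in>UNIV. W i j * (g i powr (2/p) + g j powr (2/p)) powr p)
     + (\<Sum>i\<in>UNIV. kappa i * (g i)^2)"
  using assms by (simp add: antibalanced_energy_def powr_powr)

lemma antibalanced_energy_powr_roots_ge:
  assumes W: "\<And>i j. 0 \<le> W i j" and g: "\<And>i. 0 \<le> g i" and p: "1 < p"
  shows "2 powr (p - 1) * (\<Sum>i\<in>UNIV. \<Sum>j\<in>UNIV. W i j * g i * g j) + (\<Sum>i\<in>UNIV. kappa i * (g i)^2)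
    \<le> antibalanced_energy W kappa p (\<lambda>i. g i powr (2/p))"
proof -
  have "2 powr p * (W i j * g i * g j) \<le> W i j * (g i powr (2/p) + g j powr (2/p)) powr p" for i j
    using mult_left_mono[OF sum_roots_powr_ge[OF g[of i] g[of j] p] W[of i j]] by (simp add: mult_ac)
  then have "2 powr p * (\<Sum>i\<in>UNIV. \<Sum>j\<in>UNIV. W i j * g i * g j)
      \<le> (\<Sum>i\<in>UNIV. \<Sum>j\<in>UNIV. W i j * (g i powr (2/p) + g j powr (2/p)) powr p)"
    unfolding sum_distrib_left by (intro sum_mono)
  then show ?thesis
    using g p by (simp add: antibalanced_energy_powr_roots powr_diff)
qed

lemma antibalanced_energy_powr_roots_le:
  assumes W: "\<And>i j. 0 \<le> W i j" and g: "\<And>i. 0 \<le> g i" and p: "1 < p"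
  shows "antibalanced_energy W kappa p (\<lambda>i. g i powr (2/p))
    \<le> 2 powr (p - 1) * ((\<Sum>i\<in>UNIV. \<Sum>j\<in>UNIV. W i j * g i * g j)
        + 8 * p / (p - 1)^2 * (\<Sum>i\<in>UNIV. \<Sum>j\<in>UNIV. W i j * ((g i)^2 + (g j)^2)))
      + (\<Sum>i\<in>UNIV. kappa i * (g i)^2)"
proof -
  define c where "c = 8 * p / (p - 1)^2"
  have "W i j * (g i powr (2/p) + g j powr (2/p)) powr p
      \<le> 2 powr p * (W i j * g i * g j + c * (W i j * ((g i)^2 + (g j)^2)))" for i j
  proof -
    have "W i j * (g i powr (2/p) + g j powr (2/p)) powr p
        \<le> W i j * (2 powr p * (g i * g j + ((g i)^2 + (g j)^2) * c))"
      using sum_roots_powr_le[OF g[of i] g[of j] p] W[of i j] unfolding c_def by (rule mult_left_mono)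
    then show ?thesis by (simp add: algebra_simps)
  qed
  then have "(\<Sum>i\<in>UNIV. \<Sum>j\<in>UNIV. W i j * (g i powr (2/p) + g j powr (2/p)) powr p)
      \<le> 2 powr p * ((\<Sum>i\<in>UNIV. \<Sum>j\<in>UNIV. W i j * g i * g j)
        + c * (\<Sum>i\<in>UNIV. \<Sum>j\<in>UNIV. W i j * ((g i)^2 + (g j)^2)))"
    unfolding sum_distrib_left sum.distrib[symmetric] by (intro sum_mono)
  then show ?thesis
    using g p by (simp add: antibalanced_energy_powr_roots powr_diff c_def)
qed

lemma mult_Psi: "x * Psi p x = \<bar>x\<bar> powr p"
proof (cases "x = 0")
  case False
  then have "x * Psi p x = \<bar>x\<bar> powr (p - 2) * x^2"
    by (simp add: Psi_def power2_eq_square mult_ac)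
  also have "\<dots> = \<bar>x\<bar> powr (p - 2) * \<bar>x\<bar> powr 2" by simp
  also have "\<dots> = \<bar>x\<bar> powr p" unfolding powr_add[symmetric] by simp
  finally show ?thesis .
qed (simp add: Psi_def)

section \<open>Perron theory of a connected nonnegative weight matrix\<close>

lemma tendsto_unique_zero_on_compact:
  fixes G :: "'b \<Rightarrow> 'a::topological_space" and \<phi> :: "'a \<Rightarrow> real"
  assumes S: "compact S" and cont: "continuous_on S \<phi>"
    and pos: "\<And>x. x \<in> S \<Longrightarrow> x \<noteq> x0 \<Longrightarrow> 0 < \<phi> x"
    and ev: "eventually (\<lambda>p. G p \<in> S) F"
    and lim: "((\<lambda>p. \<phi> (G p)) \<longlongrightarrow> 0) F"
  shows "(G \<longlongrightarrow> x0) F"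
proof (rule topological_tendstoI)
  fix U assume U: "open U" "x0 \<in> U"
  have T: "compact (S - U)" using S U(1) by (rule compact_diff)
  show "eventually (\<lambda>p. G p \<in> U) F"
  proof (cases "S - U = {}")
    case True
    show ?thesis using ev by eventually_elim (use True in auto)
  next
    case False
    obtain x1 where x1: "x1 \<in> S - U" "\<And>y. y \<in> S - U \<Longrightarrow> \<phi> x1 \<le> \<phi> y"
      using continuous_attains_inf[OF T False continuous_on_subset[OF cont]] by blast
    have "0 < \<phi> x1" using pos x1(1) U(2) by blast
    with lim have "eventually (\<lambda>p. \<phi> (G p) < \<phi> x1) F" by (rule order_tendstoD)
    with ev show ?thesis by eventually_elim (use x1(2) in force)
  qed
qed

lemma quadratic_nonpos_imp_linear_zero:
  fixes x c :: real
  assumes "\<And>t. t * x + t^2 * c \<le> 0"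
  shows "x = 0"
proof -
  define d where "d = \<bar>c\<bar> + 1"
  have "0 < d" "1 \<le> d + c" by (auto simp: d_def)
  have "x^2 * (d + c) / d^2 = (x / d) * x + (x / d)^2 * c"
    using \<open>0 < d\<close> by (simp add: power2_eq_square field_simps)
  also have "\<dots> \<le> 0" by (rule assms)
  finally have "x^2 * (d + c) \<le> 0" using \<open>0 < d\<close> by (simp add: divide_le_0_iff)
  then have "x^2 \<le> 0" using \<open>1 \<le> d + c\<close> by (simp add: mult_le_0_iff)
  then show "x = 0" by simp
qed

locale perron_graph =
  fixes W :: "'n::finite \<Rightarrow> 'n \<Rightarrow> real" and mu :: "'n \<Rightarrow> real"
  assumes W_sym: "W i j = W j i"
    and W_nonneg: "0 \<le> W i j"
    and mu_pos: "0 < mu i"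
    and connected: "(\<lambda>i j. 0 < W i j)\<^sup>*\<^sup>* i j"
begin

definition quad_form :: "('n \<Rightarrow> real) \<Rightarrow> real" where
  "quad_form g = (\<Sum>i\<in>UNIV. \<Sum>j\<in>UNIV. W i j * g i * g j)"

definition mu_norm_sq :: "('n \<Rightarrow> real) \<Rightarrow> real" where
  "mu_norm_sq g = (\<Sum>i\<in>UNIV. mu i * (g i)^2)"

(* A set of vectors rather than functions, so that Heine-Borel applies. *)
definition nonneg_unit_sphere :: "(real^'n) set" where
  "nonneg_unit_sphere = {v. (\<forall>i. 0 \<le> v $ i) \<and> mu_norm_sq (($) v) = 1}"

lemma vec_lambda_in_nonneg_unit_sphere_iff [simp]:
  "vec_lambda g \<in> nonneg_unit_sphere \<longleftrightarrow> (\<forall>i. 0 \<le> g i) \<and> mu_norm_sq g = 1"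
  by (simp add: nonneg_unit_sphere_def vec_lambda_inverse)

lemma mu_norm_sq_nonneg: "0 \<le> mu_norm_sq g"
  unfolding mu_norm_sq_def using mu_pos by (intro sum_nonneg) (simp add: less_imp_le)

lemma mu_norm_sq_eq_0_iff: "mu_norm_sq g = 0 \<longleftrightarrow> g = (\<lambda>_. 0)"
  unfolding mu_norm_sq_def using mu_pos
  by (subst sum_nonneg_eq_0_iff) (auto simp: fun_eq_iff less_imp_le, metis less_irrefl)

lemma mu_norm_sq_pos_iff: "0 < mu_norm_sq g \<longleftrightarrow> g \<noteq> (\<lambda>_. 0)"
  using mu_norm_sq_nonneg[of g] mu_norm_sq_eq_0_iff[of g] by linarith

lemma mu_norm_sq_scale: "mu_norm_sq (\<lambda>i. c * g i) = c^2 * mu_norm_sq g"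
  unfolding mu_norm_sq_def by (simp add: sum_distrib_left power_mult_distrib algebra_simps)

lemma mu_norm_sq_zero [simp]: "mu_norm_sq (\<lambda>_. 0) = 0"
  by (simp add: mu_norm_sq_def)

lemma mu_norm_sq_abs [simp]: "mu_norm_sq (\<lambda>i. \<bar>g i\<bar>) = mu_norm_sq g"
  by (simp add: mu_norm_sq_def)

lemma mu_norm_sq_powr_half: "mu_norm_sq (\<lambda>i. \<bar>h i\<bar> powr (p/2)) = (\<Sum>i\<in>UNIV. mu i * \<bar>h i\<bar> powr p)"
proof -
  have "(\<bar>h i\<bar> powr (p/2))^2 = \<bar>h i\<bar> powr p" for i
    by (simp add: power2_eq_square powr_add[symmetric])
  then show ?thesis by (simp add: mu_norm_sq_def)
qed

lemma quad_form_scale: "quad_form (\<lambda>i. c * g i) = c^2 * quad_form g"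
  unfolding quad_form_def by (simp add: sum_distrib_left power2_eq_square algebra_simps)

lemma quad_form_le_abs: "quad_form g \<le> quad_form (\<lambda>i. \<bar>g i\<bar>)"
  unfolding quad_form_def using W_nonneg
  by (intro sum_mono) (simp add: mult.assoc abs_mult[symmetric] mult_left_mono)

lemma square_le_inverse_mu:
  assumes "mu_norm_sq g = 1" shows "(g i)^2 \<le> 1 / mu i"
proof -
  have "mu i * (g i)^2 \<le> mu_norm_sq g"
    unfolding mu_norm_sq_def using mu_pos
    by (intro member_le_sum) (auto simp: less_imp_le)
  then show ?thesis using assms mu_pos[of i] by (simp add: field_simps)
qed

lemma compact_nonneg_unit_sphere: "compact nonneg_unit_sphere"
proof (rule compact_eq_bounded_closed[THEN iffD2], rule conjI)
  have "nonneg_unit_sphere \<subseteq> cbox 0 (\<chi> i. sqrt (1 / mu i))"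
    unfolding nonneg_unit_sphere_def
    by (auto simp: mem_box_cart intro!: real_le_rsqrt square_le_inverse_mu)
  then show "bounded nonneg_unit_sphere" by (rule bounded_subset[OF bounded_cbox])
  show "closed nonneg_unit_sphere"
    unfolding nonneg_unit_sphere_def mu_norm_sq_def
    by (intro closed_Collect_conj closed_Collect_all closed_Collect_le closed_Collect_eq continuous_intros)
qed

lemma nonneg_unit_sphere_nonempty: "nonneg_unit_sphere \<noteq> {}"
proof -
  define c where "c = 1 / sqrt (mu_norm_sq (\<lambda>_. 1))"
  have "0 < mu_norm_sq (\<lambda>_. 1)" by (simp add: mu_norm_sq_pos_iff fun_eq_iff)
  then have "(\<chi> i. c) \<in> nonneg_unit_sphere"
    using mu_norm_sq_scale[of c "\<lambda>_. 1"] by (simp add: c_def power_divide)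
  then show ?thesis by blast
qed

lemma exists_quad_form_maximizer:
  "\<exists>g. (\<forall>i. 0 \<le> g i) \<and> mu_norm_sq g = 1 \<and>
     (\<forall>h. (\<forall>i. 0 \<le> h i) \<and> mu_norm_sq h = 1 \<longrightarrow> quad_form h \<le> quad_form g)"
proof -
  have "continuous_on nonneg_unit_sphere (\<lambda>v. quad_form (($) v))"
    unfolding quad_form_def by (intro continuous_intros)
  then obtain v where v: "v \<in> nonneg_unit_sphere"
    and v_max: "\<forall>y\<in>nonneg_unit_sphere. quad_form (($) y) \<le> quad_form (($) v)"
    using continuous_attains_sup[OF compact_nonneg_unit_sphere nonneg_unit_sphere_nonempty] by blast
  have "quad_form h \<le> quad_form (($) v)" if "\<forall>i. 0 \<le> h i" "mu_norm_sq h = 1" for h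
    using v_max[rule_format, of "vec_lambda h"] that by (simp add: vec_lambda_inverse)
  with v show ?thesis unfolding nonneg_unit_sphere_def by blast
qed

definition perron_vector :: "'n \<Rightarrow> real" where
  "perron_vector = (SOME g. (\<forall>i. 0 \<le> g i) \<and> mu_norm_sq g = 1 \<and>
     (\<forall>h. (\<forall>i. 0 \<le> h i) \<and> mu_norm_sq h = 1 \<longrightarrow> quad_form h \<le> quad_form g))"

definition perron_root :: real where
  "perron_root = quad_form perron_vector"

lemma
  shows perron_vector_nonneg: "0 \<le> perron_vector i"
    and mu_norm_sq_perron_vector: "mu_norm_sq perron_vector = 1"
    and quad_form_le_perron_root: "\<lbrakk>\<And>i. 0 \<le> h i; mu_norm_sq h = 1\<rbrakk> \<Longrightarrow> quad_form h \<le> perron_root"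
  using someI_ex[OF exists_quad_form_maximizer]
  unfolding perron_vector_def[symmetric] perron_root_def by auto

lemma quad_form_le: "quad_form g \<le> perron_root * mu_norm_sq g"
proof (cases "g = (\<lambda>_. 0)")
  case False
  then have N: "0 < mu_norm_sq g" by (simp add: mu_norm_sq_pos_iff)
  define c where "c = 1 / sqrt (mu_norm_sq g)"
  have c2: "c^2 = 1 / mu_norm_sq g" using N by (simp add: c_def power_divide)
  have "mu_norm_sq (\<lambda>i. c * \<bar>g i\<bar>) = 1"
    using N by (simp add: mu_norm_sq_scale c2)
  then have "quad_form (\<lambda>i. c * \<bar>g i\<bar>) \<le> perron_root"
    using N by (intro quad_form_le_perron_root) (simp_all add: c_def)
  then have "c^2 * quad_form (\<lambda>i. \<bar>g i\<bar>) \<le> perron_root"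
    by (simp only: quad_form_scale)
  then have "quad_form (\<lambda>i. \<bar>g i\<bar>) \<le> perron_root * mu_norm_sq g"
    using N by (simp add: c2 field_simps)
  then show ?thesis using quad_form_le_abs[of g] by linarith
qed (simp add: quad_form_def mu_norm_sq_def)

lemma quad_form_add:
  "quad_form (\<lambda>i. g i + t * h i) =
     quad_form g + 2 * t * (\<Sum>i\<in>UNIV. \<Sum>j\<in>UNIV. W i j * g i * h j) + t^2 * quad_form h"
proof -
  have "W i j * (g i + t * h i) * (g j + t * h j) = W i j * g i * g j
      + t * (W i j * h i * g j) + t * (W i j * g i * h j) + t^2 * (W i j * h i * h j)" for i j
    by (simp add: algebra_simps power2_eq_square)
  moreover have "(\<Sum>i\<in>UNIV. \<Sum>j\<in>UNIV. W i j * h i * g j) = (\<Sum>i\<in>UNIV. \<Sum>j\<in>UNIV. W i j * g i * h j)"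
    by (subst sum.swap) (simp add: W_sym mult_ac)
  ultimately show ?thesis
    unfolding quad_form_def by (simp add: sum.distrib sum_distrib_left[symmetric])
qed

lemma mu_norm_sq_add:
  "mu_norm_sq (\<lambda>i. g i + t * h i) =
     mu_norm_sq g + 2 * t * (\<Sum>i\<in>UNIV. mu i * g i * h i) + t^2 * mu_norm_sq h"
proof -
  have "mu i * (g i + t * h i)^2 = mu i * (g i)^2 + 2 * t * (mu i * g i * h i) + t^2 * (mu i * (h i)^2)" for i
    by (simp add: algebra_simps power2_eq_square)
  then show ?thesis
    unfolding mu_norm_sq_def by (simp add: sum.distrib sum_distrib_left)
qed

lemma eigen_equation_of_maximizer:
  assumes "quad_form g = perron_root * mu_norm_sq g"
  shows "(\<Sum>j\<in>UNIV. W k j * g j) = perron_root * mu k * g k"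
proof -
  \<comment> \<open>Perturb \<open>g\<close> along the residual \<open>r\<close> of the eigen-equation; the first-order term is
    \<open>2 \<Sum>j. (r j)^2\<close>, which must vanish since \<open>g\<close> maximises the Rayleigh quotient.\<close>
  define r where "r j = (\<Sum>i\<in>UNIV. W j i * g i) - perron_root * mu j * g j" for j
  have r_eq: "(\<Sum>i\<in>UNIV. W j i * g i) = r j + perron_root * mu j * g j" for j
    by (simp add: r_def)
  have "(\<Sum>i\<in>UNIV. \<Sum>j\<in>UNIV. W i j * g i * r j) = (\<Sum>j\<in>UNIV. r j * (\<Sum>i\<in>UNIV. W j i * g i))"
    by (subst sum.swap) (simp add: sum_distrib_left W_sym mult_ac)
  also have "\<dots> = (\<Sum>j\<in>UNIV. r j * (r j + perron_root * mu j * g j))"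
    by (simp only: r_eq)
  finally have cross: "(\<Sum>i\<in>UNIV. \<Sum>j\<in>UNIV. W i j * g i * r j) - perron_root * (\<Sum>j\<in>UNIV. mu j * g j * r j)
      = (\<Sum>j\<in>UNIV. (r j)^2)"
    by (simp add: algebra_simps sum.distrib sum_distrib_left power2_eq_square)
  have "t * (2 * (\<Sum>j\<in>UNIV. (r j)^2)) + t^2 * (quad_form r - perron_root * mu_norm_sq r) \<le> 0" for t
    using quad_form_le[of "\<lambda>i. g i + t * r i"] assms cross
    unfolding quad_form_add mu_norm_sq_add by (simp add: algebra_simps)
  then have "2 * (\<Sum>j\<in>UNIV. (r j)^2) = 0" by (rule quadratic_nonpos_imp_linear_zero)
  then have "r k = 0" by (simp add: sum_nonneg_eq_0_iff)
  then show ?thesis by (simp add: r_def)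
qed

lemma eigenvector_nonneg_imp_pos:
  assumes eq: "\<And>k. (\<Sum>j\<in>UNIV. W k j * g j) = L * mu k * g k"
    and nonneg: "\<And>i. 0 \<le> g i" and nonzero: "g \<noteq> (\<lambda>_. 0)"
  shows "0 < g i"
proof (rule ccontr)
  assume "\<not> 0 < g i"
  then have "g i = 0" using nonneg[of i] by linarith
  have "g j = 0" for j
    using connected[of i j]
  proof (induction rule: rtranclp_induct)
    case (step y z)
    have "(\<Sum>j\<in>UNIV. W y j * g j) = 0" using eq[of y] step.IH by simp
    then have "W y z * g z = 0" using W_nonneg nonneg by (simp add: sum_nonneg_eq_0_iff)
    with step.hyps(2) show ?case by simp
  qed fact
  with nonzero show False by auto
qed

lemma eigen_equation_perron_vector:
  "(\<Sum>j\<in>UNIV. W k j * perron_vector j) = perron_root * mu k * perron_vector k"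
  by (intro eigen_equation_of_maximizer) (simp add: perron_root_def mu_norm_sq_perron_vector)

lemma eigenvector_proportional_to_positive:
  assumes eq_g: "\<And>k. (\<Sum>j\<in>UNIV. W k j * g j) = L * mu k * g k"
    and eq_h: "\<And>k. (\<Sum>j\<in>UNIV. W k j * h j) = L * mu k * h k"
    and g_nonneg: "\<And>i. 0 \<le> g i" and h_pos: "\<And>i. 0 < h i"
  shows "\<exists>t \<ge> 0. g = (\<lambda>k. t * h k)"
proof -
  \<comment> \<open>With \<open>t\<close> the largest multiple of \<open>h\<close> below \<open>g\<close>, the eigenvector \<open>g - t h\<close>
    is nonnegative and vanishes somewhere, hence vanishes everywhere.\<close>
  define t where "t = Min (range (\<lambda>k. g k / h k))"
  have "t \<in> range (\<lambda>k. g k / h k)" unfolding t_def by (intro Min_in) auto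
  then obtain k0 where k0: "t = g k0 / h k0" by auto
  have t_le: "t \<le> g k / h k" for k unfolding t_def by (intro Min_le) auto
  define u where "u k = g k - t * h k" for k
  have eq_u: "(\<Sum>j\<in>UNIV. W k j * u j) = L * mu k * u k" for k
  proof -
    have "(\<Sum>j\<in>UNIV. W k j * u j) = (\<Sum>j\<in>UNIV. W k j * g j) - t * (\<Sum>j\<in>UNIV. W k j * h j)"
      by (simp add: u_def right_diff_distrib sum_subtractf sum_distrib_left mult_ac)
    then show ?thesis unfolding eq_g eq_h by (simp add: u_def algebra_simps)
  qed
  have u_nonneg: "0 \<le> u k" for k
    using t_le[of k] h_pos[of k] by (simp add: u_def pos_le_divide_eq)
  have "u = (\<lambda>_. 0)"
  proof (rule ccontr)
    assume "u \<noteq> (\<lambda>_. 0)"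
    from eigenvector_nonneg_imp_pos[OF eq_u u_nonneg this, of k0] h_pos[of k0]
    show False by (simp add: u_def k0)
  qed
  moreover have "0 \<le> t" using k0 g_nonneg[of k0] h_pos[of k0] by simp
  ultimately show ?thesis by (intro exI[of _ t]) (auto simp: u_def fun_eq_iff)
qed

lemma quad_form_maximizer_unique:
  assumes g: "\<And>i. 0 \<le> g i" "mu_norm_sq g = 1" "quad_form g = perron_root"
  shows "g = perron_vector"
proof -
  have eq_g: "(\<Sum>j\<in>UNIV. W k j * g j) = perron_root * mu k * g k" for k
    using g by (intro eigen_equation_of_maximizer) simp
  have h_pos: "0 < perron_vector k" for k
    using perron_vector_nonneg mu_norm_sq_perron_vector
    by (intro eigenvector_nonneg_imp_pos[OF eigen_equation_perron_vector]) auto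
  obtain t where "0 \<le> t" and g_eq: "g = (\<lambda>k. t * perron_vector k)"
    using eigenvector_proportional_to_positive[OF eq_g eigen_equation_perron_vector g(1) h_pos] by blast
  then have "t^2 = 1"
    using g(2) mu_norm_sq_perron_vector by (simp add: mu_norm_sq_scale)
  with \<open>0 \<le> t\<close> g_eq show ?thesis by (simp add: power2_eq_1_iff)
qed

abbreviation adjacency_mu :: "'n \<Rightarrow> 'n \<Rightarrow> real" where
  "adjacency_mu i j \<equiv> W i j / mu i"

lemma mat_eigenvector_adjacency_mu_iff:
  "mat_eigenvector adjacency_mu L f \<longleftrightarrow>
     f \<noteq> (\<lambda>_. 0) \<and> (\<forall>i. (\<Sum>j\<in>UNIV. W i j * f j) = L * mu i * f i)"
proof -
  have "(\<Sum>j\<in>UNIV. W i j / mu i * f j) = L * f i \<longleftrightarrow> (\<Sum>j\<in>UNIV. W i j * f j) = L * mu i * f i" for i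
    using mu_pos[of i] by (auto simp: sum_divide_distrib[symmetric] field_simps)
  then show ?thesis unfolding mat_eigenvector_def by simp
qed

lemma mat_eigenvector_perron_vector: "mat_eigenvector adjacency_mu perron_root perron_vector"
  unfolding mat_eigenvector_adjacency_mu_iff
  using mu_norm_sq_perron_vector eigen_equation_perron_vector by auto

lemma eigenvalue_le_perron_root:
  assumes "mat_eigenvector adjacency_mu L f"
  shows "L \<le> perron_root"
proof -
  have eq: "\<And>i. (\<Sum>j\<in>UNIV. W i j * f j) = L * mu i * f i" and "f \<noteq> (\<lambda>_. 0)"
    using assms unfolding mat_eigenvector_adjacency_mu_iff by auto
  then have N: "0 < mu_norm_sq f" by (simp add: mu_norm_sq_pos_iff)
  have "quad_form f = (\<Sum>i\<in>UNIV. f i * (\<Sum>j\<in>UNIV. W i j * f j))"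
    unfolding quad_form_def by (simp add: sum_distrib_left mult_ac)
  also have "\<dots> = L * mu_norm_sq f"
    unfolding eq mu_norm_sq_def by (simp add: sum_distrib_left power2_eq_square mult_ac)
  finally show ?thesis using quad_form_le[of f] N by simp
qed

lemma eigenvectors_mu_orthogonal:
  assumes "mat_eigenvector adjacency_mu L f" "mat_eigenvector adjacency_mu M g" "L \<noteq> M"
  shows "(\<Sum>i\<in>UNIV. mu i * f i * g i) = 0"
proof -
  have eq_f: "\<And>i. (\<Sum>j\<in>UNIV. W i j * f j) = L * mu i * f i"
    and eq_g: "\<And>i. (\<Sum>j\<in>UNIV. W i j * g j) = M * mu i * g i"
    using assms unfolding mat_eigenvector_adjacency_mu_iff by auto
  have "(\<Sum>i\<in>UNIV. g i * (\<Sum>j\<in>UNIV. W i j * f j)) = (\<Sum>j\<in>UNIV. f j * (\<Sum>i\<in>UNIV. W j i * g i))"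
    unfolding sum_distrib_left by (subst sum.swap) (simp add: W_sym mult_ac)
  then have "L * (\<Sum>i\<in>UNIV. mu i * f i * g i) = M * (\<Sum>i\<in>UNIV. mu i * f i * g i)"
    unfolding eq_f eq_g by (simp add: sum_distrib_left mult_ac)
  then show ?thesis using assms(3) by simp
qed

lemma finite_mat_eigenvalues: "finite (mat_eigenvalues adjacency_mu)"
proof -
  let ?EV = "mat_eigenvalues adjacency_mu"
  define ef where "ef L = (SOME f. mat_eigenvector adjacency_mu L f)" for L
  have ef: "mat_eigenvector adjacency_mu L (ef L)" if "L \<in> ?EV" for L
  proof -
    from that obtain f where "mat_eigenvector adjacency_mu L f"
      unfolding mat_eigenvalues_def by blast
    then show ?thesis unfolding ef_def by (rule someI[of "mat_eigenvector adjacency_mu L"])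
  qed
  define \<phi> :: "real \<Rightarrow> real^'n" where "\<phi> L = (\<chi> i. sqrt (mu i) * ef L i)" for L
  have inner: "\<phi> L \<bullet> \<phi> M = (\<Sum>i\<in>UNIV. mu i * ef L i * ef M i)" for L M
    unfolding \<phi>_def inner_vec_def using mu_pos
    by (intro sum.cong) (auto simp: real_sqrt_mult[symmetric] less_imp_le)
  have orth: "\<phi> L \<bullet> \<phi> M = 0" if "L \<in> ?EV" "M \<in> ?EV" "L \<noteq> M" for L M
    unfolding inner using ef that by (intro eigenvectors_mu_orthogonal)
  have nonzero: "\<phi> L \<noteq> 0" if "L \<in> ?EV" for L
  proof
    assume "\<phi> L = 0"
    then have "sqrt (mu i) * ef L i = 0" for i
      unfolding \<phi>_def by (metis vec_lambda_beta zero_index)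
    then have "ef L = (\<lambda>_. 0)"
      using mu_pos by (auto simp: fun_eq_iff less_imp_neq[symmetric])
    with ef[OF that] show False by (simp add: mat_eigenvector_def)
  qed
  have "independent (\<phi> ` ?EV)"
    using orth nonzero
    by (intro pairwise_orthogonal_independent) (auto simp: pairwise_def orthogonal_def)
  then have "finite (\<phi> ` ?EV)" using independent_bound by blast
  moreover have "inj_on \<phi> ?EV"
  proof (rule inj_onI, rule ccontr)
    fix L M assume "L \<in> ?EV" "M \<in> ?EV" "\<phi> L = \<phi> M" "L \<noteq> M"
    then show False using orth[of L M] nonzero[of L] by simp
  qed
  ultimately show ?thesis using finite_imageD by blast
qed

lemma mat_lambda_max_adjacency_mu: "mat_lambda_max adjacency_mu = perron_root"
  unfolding mat_lambda_max_def
  using finite_mat_eigenvalues mat_eigenvector_perron_vector eigenvalue_le_perron_root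
  by (intro Max_eqI) (auto simp: mat_eigenvalues_def)

definition weight_bound :: real where
  "weight_bound = (\<Sum>i\<in>UNIV. \<Sum>j\<in>UNIV. W i j * (1 / mu i + 1 / mu j))"

definition potential_bound :: "('n \<Rightarrow> real) \<Rightarrow> real" where
  "potential_bound kappa = (\<Sum>i\<in>UNIV. \<bar>kappa i\<bar> / mu i)"

lemma weight_term_le_weight_bound:
  assumes "mu_norm_sq g = 1"
  shows "(\<Sum>i\<in>UNIV. \<Sum>j\<in>UNIV. W i j * ((g i)^2 + (g j)^2)) \<le> weight_bound"
  unfolding weight_bound_def using square_le_inverse_mu[OF assms] W_nonneg
  by (intro sum_mono mult_left_mono add_mono) auto

lemma potential_term_le_potential_bound:
  assumes "mu_norm_sq g = 1"
  shows "\<bar>\<Sum>i\<in>UNIV. kappa i * (g i)^2\<bar> \<le> potential_bound kappa"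
proof -
  have "\<bar>kappa i * (g i)^2\<bar> \<le> \<bar>kappa i\<bar> / mu i" for i
    using mult_left_mono[OF square_le_inverse_mu[OF assms, of i], of "\<bar>kappa i\<bar>"]
    by (simp add: abs_mult)
  then have "(\<Sum>i\<in>UNIV. \<bar>kappa i * (g i)^2\<bar>) \<le> potential_bound kappa"
    unfolding potential_bound_def by (rule sum_mono)
  then show ?thesis by (rule order_trans[OF sum_abs])
qed

lemma antibalanced_energy_le_quad_form:
  assumes p: "1 < p" and h: "h \<in> S_p mu p"
  shows "antibalanced_energy W kappa p h
    \<le> 2 powr (p - 1) * (quad_form (\<lambda>i. \<bar>h i\<bar> powr (p/2)) + 8 * p / (p - 1)^2 * weight_bound)
      + potential_bound kappa"
proof -
  define g where "g = (\<lambda>i. \<bar>h i\<bar> powr (p/2))"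
  have g_nonneg: "0 \<le> g i" for i by (simp add: g_def)
  have g_norm: "mu_norm_sq g = 1" using h by (simp add: g_def mu_norm_sq_powr_half S_p_def)
  have "antibalanced_energy W kappa p h \<le> antibalanced_energy W kappa p (\<lambda>i. g i powr (2/p))"
    using antibalanced_energy_le_abs[of W p kappa h] W_nonneg p by (simp add: g_def powr_powr)
  also have "\<dots> \<le> 2 powr (p - 1) * (quad_form g
        + 8 * p / (p - 1)^2 * (\<Sum>i\<in>UNIV. \<Sum>j\<in>UNIV. W i j * ((g i)^2 + (g j)^2)))
      + (\<Sum>i\<in>UNIV. kappa i * (g i)^2)"
    unfolding quad_form_def by (rule antibalanced_energy_powr_roots_le[OF W_nonneg g_nonneg p])
  also have "\<dots> \<le> 2 powr (p - 1) * (quad_form g + 8 * p / (p - 1)^2 * weight_bound)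
      + potential_bound kappa"
    using weight_term_le_weight_bound[OF g_norm] potential_term_le_potential_bound[OF g_norm, of kappa] p
    by (intro add_mono mult_left_mono) auto
  finally show ?thesis by (simp add: g_def)
qed

lemma perron_vector_powr_in_S_p: "0 < p \<Longrightarrow> (\<lambda>i. perron_vector i powr (2/p)) \<in> S_p mu p"
  using mu_norm_sq_perron_vector perron_vector_nonneg
  by (simp add: S_p_def mu_norm_sq_def powr_powr)

lemma antibalanced_energy_perron_vector_powr_ge:
  assumes p: "1 < p"
  shows "2 powr (p - 1) * perron_root - potential_bound kappa
    \<le> antibalanced_energy W kappa p (\<lambda>i. perron_vector i powr (2/p))"
proof -
  have "2 powr (p - 1) * perron_root + (\<Sum>i\<in>UNIV. kappa i * (perron_vector i)^2)
      \<le> antibalanced_energy W kappa p (\<lambda>i. perron_vector i powr (2/p))"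
    unfolding perron_root_def quad_form_def
    by (rule antibalanced_energy_powr_roots_ge[OF W_nonneg perron_vector_nonneg p])
  then show ?thesis
    using potential_term_le_potential_bound[OF mu_norm_sq_perron_vector, of kappa] by linarith
qed

lemma perron_root_minus_quad_form_le:
  assumes p: "1 < p" and f: "f \<in> S_p mu p"
    and f_max: "\<And>h. h \<in> S_p mu p \<Longrightarrow> antibalanced_energy W kappa p h \<le> antibalanced_energy W kappa p f"
  shows "perron_root - quad_form (\<lambda>i. \<bar>f i\<bar> powr (p/2))
    \<le> 8 * p / (p - 1)^2 * weight_bound + 2 * potential_bound kappa / 2 powr (p - 1)"
proof -
  have "2 powr (p - 1) * perron_root - potential_bound kappa \<le> antibalanced_energy W kappa p f"
    using antibalanced_energy_perron_vector_powr_ge[OF p, of kappa] p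
      f_max[OF perron_vector_powr_in_S_p] by linarith
  then have "2 powr (p - 1) * (perron_root - quad_form (\<lambda>i. \<bar>f i\<bar> powr (p/2))
      - 8 * p / (p - 1)^2 * weight_bound) \<le> 2 * potential_bound kappa"
    using antibalanced_energy_le_quad_form[OF p f, of kappa] by (simp add: algebra_simps)
  then have "perron_root - quad_form (\<lambda>i. \<bar>f i\<bar> powr (p/2)) - 8 * p / (p - 1)^2 * weight_bound
      \<le> 2 * potential_bound kappa / 2 powr (p - 1)"
    by (subst pos_le_divide_eq) (simp_all add: mult.commute)
  then show ?thesis by linarith
qed

lemma antibalanced_energy_eigenfunction:
  assumes eq: "\<And>i. (\<Sum>j\<in>UNIV. W i j * Psi p (f i + f j)) + kappa i * Psi p (f i) = L * mu i * Psi p (f i)"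
    and f: "f \<in> S_p mu p"
  shows "antibalanced_energy W kappa p f = L"
proof -
  define A where "A = (\<Sum>i\<in>UNIV. \<Sum>j\<in>UNIV. W i j * f i * Psi p (f i + f j))"
  have "A = (\<Sum>i\<in>UNIV. \<Sum>j\<in>UNIV. W i j * f j * Psi p (f i + f j))"
    unfolding A_def by (subst sum.swap) (simp add: W_sym add.commute)
  then have "2 * A = A + (\<Sum>i\<in>UNIV. \<Sum>j\<in>UNIV. W i j * f j * Psi p (f i + f j))"
    by simp
  also have "\<dots> = (\<Sum>i\<in>UNIV. \<Sum>j\<in>UNIV. W i j * ((f i + f j) * Psi p (f i + f j)))"
    unfolding A_def by (simp add: sum.distrib[symmetric] algebra_simps)
  finally have A2: "2 * A = (\<Sum>i\<in>UNIV. \<Sum>j\<in>UNIV. W i j * \<bar>f i + f j\<bar> powr p)"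
    by (simp add: mult_Psi)
  have "(\<Sum>i\<in>UNIV. f i * ((\<Sum>j\<in>UNIV. W i j * Psi p (f i + f j)) + kappa i * Psi p (f i)))
      = (\<Sum>i\<in>UNIV. f i * (L * mu i * Psi p (f i)))"
    by (simp add: eq)
  then have "A + (\<Sum>i\<in>UNIV. kappa i * \<bar>f i\<bar> powr p) = L * (\<Sum>i\<in>UNIV. mu i * \<bar>f i\<bar> powr p)"
    unfolding A_def mult_Psi[symmetric]
    by (simp add: sum.distrib sum_distrib_left algebra_simps)
  then show ?thesis
    using f A2 by (simp add: antibalanced_energy_def S_p_def)
qed

lemma tendsto_perron_vector:
  assumes f_norm: "\<And>p. 1 < p \<Longrightarrow> fp p \<in> S_p mu p"
    and f_max: "\<And>p h. 1 < p \<Longrightarrow> h \<in> S_p mu p \<Longrightarrow>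
      antibalanced_energy W kappa p h \<le> antibalanced_energy W kappa p (fp p)"
  shows "((\<lambda>p. \<bar>fp p i\<bar> powr (p / 2)) \<longlongrightarrow> perron_vector i) at_top"
proof -
  define G where "G p = (\<chi> i. \<bar>fp p i\<bar> powr (p / 2))" for p
  define gap where "gap p = perron_root - quad_form (($) (G p))" for p
  have G_sphere: "G p \<in> nonneg_unit_sphere" if "1 < p" for p
    using f_norm[OF that] by (simp add: G_def mu_norm_sq_powr_half S_p_def)
  have gap_ge: "0 \<le> gap p" if "1 < p" for p
    using G_sphere[OF that] quad_form_le_perron_root by (simp add: gap_def nonneg_unit_sphere_def)
  have gap_le: "gap p \<le> 8 * p / (p - 1)^2 * weight_bound + 2 * potential_bound kappa / 2 powr (p - 1)"
    if "1 < p" for p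
    using perron_root_minus_quad_form_le[OF that f_norm[OF that] f_max[OF that]]
    by (simp add: gap_def G_def vec_lambda_inverse)
  have "(gap \<longlongrightarrow> 0) at_top"
  proof (rule tendsto_sandwich[OF _ _ tendsto_const])
    show "\<forall>\<^sub>F p in at_top. 0 \<le> gap p"
      using eventually_gt_at_top[of 1] by eventually_elim (rule gap_ge)
    show "\<forall>\<^sub>F p in at_top. gap p
        \<le> 8 * p / (p - 1)^2 * weight_bound + 2 * potential_bound kappa / 2 powr (p - 1)"
      using eventually_gt_at_top[of 1] by eventually_elim (rule gap_le)
    have "((\<lambda>p. 8 * p / (p - 1)^2 * a + 2 * b / 2 powr (p - 1)) \<longlongrightarrow> 0) at_top" for a b :: real
      by real_asymp
    then show "((\<lambda>p. 8 * p / (p - 1)^2 * weight_bound + 2 * potential_bound kappa / 2 powr (p - 1))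
        \<longlongrightarrow> 0) at_top" .
  qed
  moreover have "0 < perron_root - quad_form (($) v)"
    if v: "v \<in> nonneg_unit_sphere" "v \<noteq> vec_lambda perron_vector" for v
  proof -
    have "quad_form (($) v) \<le> perron_root"
      using v(1) quad_form_le_perron_root by (simp add: nonneg_unit_sphere_def)
    moreover have "($) v \<noteq> perron_vector" using v(2) vec_nth_inverse by metis
    then have "quad_form (($) v) \<noteq> perron_root"
      using v(1) quad_form_maximizer_unique by (auto simp: nonneg_unit_sphere_def)
    ultimately show ?thesis by simp
  qed
  moreover have "continuous_on nonneg_unit_sphere (\<lambda>v. perron_root - quad_form (($) v))"
    unfolding quad_form_def by (intro continuous_intros)
  moreover have "\<forall>\<^sub>F p in at_top. G p \<in> nonneg_unit_sphere"
    using eventually_gt_at_top[of 1] by eventually_elim (rule G_sphere)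
  ultimately have "(G \<longlongrightarrow> vec_lambda perron_vector) at_top"
    unfolding gap_def by (intro tendsto_unique_zero_on_compact[OF compact_nonneg_unit_sphere])
  from tendsto_vec_nth[OF this, of i] show ?thesis by (simp add: G_def)
qed

end

section \<open>Antibalanced signed graphs\<close>

definition edge_weight :: "('n \<Rightarrow> 'n \<Rightarrow> bool) \<Rightarrow> ('n \<Rightarrow> 'n \<Rightarrow> real) \<Rightarrow> 'n \<Rightarrow> 'n \<Rightarrow> real" where
  "edge_weight E w i j = (if E i j then w i j else 0)"

locale antibalanced_graph =
  fixes E :: "'n::finite \<Rightarrow> 'n \<Rightarrow> bool" and sigma w :: "'n \<Rightarrow> 'n \<Rightarrow> real" and mu :: "'n \<Rightarrow> real"
  assumes signed_graph: "signed_graph E sigma w mu"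
    and connected_graph: "connected_graph E"
    and antibalanced: "\<And>i j. E i j \<Longrightarrow> sigma i j = -1"
begin

sublocale perron_graph "edge_weight E w" mu
proof
  fix i j
  show "edge_weight E w i j = edge_weight E w j i" "0 \<le> edge_weight E w i j" "0 < mu i"
    using signed_graph unfolding signed_graph_def edge_weight_def by (auto simp: less_imp_le)
  have "E \<le> (\<lambda>i j. 0 < edge_weight E w i j)"
    using signed_graph unfolding signed_graph_def edge_weight_def by auto
  then have "E\<^sup>*\<^sup>* \<le> (\<lambda>i j. 0 < edge_weight E w i j)\<^sup>*\<^sup>*" by (rule rtranclp_mono)
  then show "(\<lambda>i j. 0 < edge_weight E w i j)\<^sup>*\<^sup>* i j"
    using connected_graph unfolding connected_graph_def by blast
qed

lemma rayleigh_eq_antibalanced_energy: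
  assumes "h \<in> S_p mu p"
  shows "rayleigh E sigma w mu kappa p h = antibalanced_energy (edge_weight E w) kappa p h"
proof -
  have "(\<Sum>(i, j)\<in>{(i, j). E i j}. w i j * \<bar>h i - sigma i j * h j\<bar> powr p)
      = (\<Sum>(i, j)\<in>UNIV. edge_weight E w i j * \<bar>h i + h j\<bar> powr p)"
    by (rule sum.mono_neutral_cong_left) (auto simp: edge_weight_def antibalanced split: if_splits)
  then show ?thesis
    using assms by (simp add: rayleigh_def antibalanced_energy_def S_p_def sum.cartesian_product)
qed

lemma p_laplacian_eq:
  "p_laplacian E sigma w kappa p f i =
     (\<Sum>j\<in>UNIV. edge_weight E w i j * Psi p (f i + f j)) + kappa i * Psi p (f i)"
proof -
  have "(\<Sum>j\<in>{j. E i j}. w i j * Psi p (f i - sigma i j * f j))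
      = (\<Sum>j\<in>UNIV. edge_weight E w i j * Psi p (f i + f j))"
    by (rule sum.mono_neutral_cong_left) (auto simp: edge_weight_def antibalanced split: if_splits)
  then show ?thesis by (simp add: p_laplacian_def)
qed

lemma eigenfunction_maximizes_antibalanced_energy:
  assumes p: "1 < p" and f: "f \<in> S_p mu p"
    and eig: "p_eigenfunction E sigma w mu kappa p f (lambda_max_p E sigma w mu kappa p)"
    and h: "h \<in> S_p mu p"
  shows "antibalanced_energy (edge_weight E w) kappa p h \<le> antibalanced_energy (edge_weight E w) kappa p f"
proof -
  \<comment> \<open>\<open>lambda_max_p\<close> is a \<open>Sup\<close> of reals, which has its intended meaning only for
    sets bounded above.\<close>
  have "bdd_above (rayleigh E sigma w mu kappa p ` S_p mu p)"
  proof (rule bdd_aboveI2)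
    fix g assume g: "g \<in> S_p mu p"
    have "rayleigh E sigma w mu kappa p g = antibalanced_energy (edge_weight E w) kappa p g"
      by (rule rayleigh_eq_antibalanced_energy[OF g])
    also have "\<dots> \<le> 2 powr (p - 1) * (quad_form (\<lambda>i. \<bar>g i\<bar> powr (p/2))
        + 8 * p / (p - 1)^2 * weight_bound) + potential_bound kappa"
      by (rule antibalanced_energy_le_quad_form[OF p g])
    also have "\<dots> \<le> 2 powr (p - 1) * (perron_root + 8 * p / (p - 1)^2 * weight_bound) + potential_bound kappa"
      using g by (intro add_right_mono mult_left_mono quad_form_le_perron_root)
        (simp_all add: mu_norm_sq_powr_half S_p_def)
    finally show "rayleigh E sigma w mu kappa p g
        \<le> 2 powr (p - 1) * (perron_root + 8 * p / (p - 1)^2 * weight_bound) + potential_bound kappa" .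
  qed
  then have "antibalanced_energy (edge_weight E w) kappa p h \<le> lambda_max_p E sigma w mu kappa p"
    unfolding lambda_max_p_def using h by (auto simp: rayleigh_eq_antibalanced_energy intro!: cSup_upper)
  also have "\<dots> = antibalanced_energy (edge_weight E w) kappa p f"
    using eig f
    by (intro antibalanced_energy_eigenfunction[symmetric]) (auto simp: p_eigenfunction_def p_laplacian_eq)
  finally show ?thesis .
qed

lemma adj_mu_negated_signature: "adj_mu E (\<lambda>i j. - sigma i j) w mu = (\<lambda>i j. edge_weight E w i j / mu i)"
  by (auto simp: fun_eq_iff adj_mu_def edge_weight_def antibalanced)

end

theorem theorem5p3:
  fixes E :: "'n::finite \<Rightarrow> 'n \<Rightarrow> bool"
    and sigma w :: "'n \<Rightarrow> 'n \<Rightarrow> real"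
    and mu kappa :: "'n \<Rightarrow> real"
    and fp :: "real \<Rightarrow> 'n \<Rightarrow> real"
  assumes graph: "signed_graph E sigma w mu"
    and conn: "connected_graph E"
    and sig: "\<And>i j. E i j \<Longrightarrow> sigma i j = -1"
    and norm: "\<And>p. p > 1 \<Longrightarrow> fp p \<in> S_p mu p"
    and eig: "\<And>p. p > 1 \<Longrightarrow>
               p_eigenfunction E sigma w mu kappa p (fp p) (lambda_max_p E sigma w mu kappa p)"
  shows "\<exists>f :: 'n \<Rightarrow> real.
           (\<forall>i. ((\<lambda>p. \<bar>fp p i\<bar> powr (p / 2)) \<longlongrightarrow> f i) at_top) \<and>
           mat_eigenvector (adj_mu E (\<lambda>i j. - sigma i j) w mu)
             (mat_lambda_max (adj_mu E (\<lambda>i j. - sigma i j) w mu)) f"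
proof -
  interpret antibalanced_graph E sigma w mu
    using graph conn sig by unfold_locales
  have "((\<lambda>p. \<bar>fp p i\<bar> powr (p / 2)) \<longlongrightarrow> perron_vector i) at_top" for i
    using norm eig eigenfunction_maximizes_antibalanced_energy
    by (intro tendsto_perron_vector[of fp kappa]) auto
  then show ?thesis
    unfolding adj_mu_negated_signature mat_lambda_max_adjacency_mu
    using mat_eigenvector_perron_vector by blast
qed

end
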